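(* For every positive integer $N$ and every admissible index $\boldsymbol{k}=(k_1,\dots,k_r)$, \[ \zeta^\diamondsuit_N(\boldsymbol{k})=\sum_{\substack{0<n_{i,1}\le\cdots\le n_{i,k_i}<N\ (i\in[r])\\ n_{i,k_i}\le n_{i+1,1}\ (i\in[r]^1_{\boldsymbol{k}})\\ n_{i,k_i}<n_{i+1,1}\ (i\in[r-1]\setminus[r]^1_{\boldsymbol{k}})}}\ \prod_{i\in[r]}\frac1{(N-n_{i,1})\,n_{i,2}\cdots n_{i,k_i}}. \]
   Context: $[n]=\{1,\dots,n\}$. An admissible index is a nonempty tuple of positive integers with last entry $\ge2$. For admissible $\boldsymbol{k}=(k_1,\dots,k_r)$: $[r]^1_{\boldsymbol{k}}=\{i\in[r]:k_i=1\}$ (note $r\notin[r]^1_{\boldsymbol{k}}$), $S_{r,N}(A)=\{(n_1,\dots,n_r)\in[N-1]^r: n_i\le n_{i+1}\ (i\in A),\ n_i<n_{i+1}\ (i\in[r-1]\setminus A)\}$, and $\zeta^\diamondsuit_N(\boldsymbol{k})=\sum_{A\subset[r]^1_{\boldsymbol{k}}}\sum_{(n_1,\dots,n_r)\in S_{r,N}(A)}\prod_{i\in A}(N-n_i)^{-1}\prod_{i\in[r]\setminus A}n_i^{-k_i}$. Empty products equal $1$. *)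

theory Defs
  imports Complex_Main "HOL-Library.FuncSet"
begin

text \<open>Indices are lists ks; entry i (1-based, i in [r]) is ks ! (i - 1).\<close>

definition admissible :: "nat list \<Rightarrow> bool" where
  "admissible ks \<longleftrightarrow> ks \<noteq> [] \<and> (\<forall>x\<in>set ks. x > 0) \<and> last ks \<ge> 2"

definition kk :: "nat list \<Rightarrow> nat \<Rightarrow> nat" where
  "kk ks i = ks ! (i - 1)"

definition ones_set :: "nat list \<Rightarrow> nat set" where
  "ones_set ks = {i \<in> {1..length ks}. kk ks i = 1}"

definition S_set :: "nat \<Rightarrow> nat \<Rightarrow> nat set \<Rightarrow> (nat \<Rightarrow> nat) set" where
  "S_set r N A = {n \<in> PiE {1..r} (\<lambda>_. {1..N-1}).
      (\<forall>i\<in>A. n i \<le> n (i+1)) \<and> (\<forall>i\<in>{1..r-1} - A. n i < n (i+1))}"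

definition zeta_diamond :: "nat \<Rightarrow> nat list \<Rightarrow> real" where
  "zeta_diamond N ks = (let r = length ks in
     \<Sum>A\<in>Pow (ones_set ks). \<Sum>n\<in>S_set r N A.
       (\<Prod>i\<in>A. 1 / (real N - real (n i))) *
       (\<Prod>i\<in>{1..r} - A. 1 / real (n i) ^ kk ks i))"

definition T_set :: "nat \<Rightarrow> nat list \<Rightarrow> (nat \<times> nat \<Rightarrow> nat) set" where
  "T_set N ks = (let r = length ks in
     {n \<in> PiE (SIGMA i:{1..r}. {1..kk ks i}) (\<lambda>_. {1..N-1}).
       (\<forall>i\<in>{1..r}. \<forall>j\<in>{1..<kk ks i}. n (i, j) \<le> n (i, j+1)) \<and>
       (\<forall>i\<in>ones_set ks. n (i, kk ks i) \<le> n (i+1, 1)) \<and>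
       (\<forall>i\<in>{1..r-1} - ones_set ks. n (i, kk ks i) < n (i+1, 1))})"

end

theory Submission
  imports Defs
begin

(* Both sides are sums over chains: of single variables n_1, ..., n_r on the left, of blocks
   n_{i,1} <= ... <= n_{i,k_i} on the right. Fixing the first variable to x turns each side into a
   function of x satisfying a recursion in the index, left_fun and right_fun below. The two are
   related by the connector C(a, b) = binom(b, a) / binom(N - 1, a): the transform
   g |-> (a |-> sum_{b >= a} C(a, b) (N - b) / b g(b)) maps right_fun to left_fun, by induction on
   the index using two summation identities for C, and it preserves the sum over a = 1, ..., N - 1.
   Hence both sides have the same total. *)

section \<open>The connector\<close>

definition connector :: "nat \<Rightarrow> nat \<Rightarrow> nat \<Rightarrow> real" where
  "connector N a b = real (b choose a) / real ((N - 1) choose a)"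

lemma Suc_times_binomial_Suc: "Suc k * (n choose Suc k) = (n - k) * (n choose k)"
  by (metis binomial_absorption binomial_absorb_comp)

lemma connector_Suc_right:
  "connector N a (Suc b) * real (Suc b - a) = connector N a b * real (Suc b)"
proof -
  have "real (Suc b - a) * real (Suc b choose a) = real (Suc b) * real (b choose a)"
    using binomial_absorb_comp[of "Suc b" a] by (metis diff_Suc_1 of_nat_mult)
  then show ?thesis unfolding connector_def by (simp add: field_simps)
qed

lemma connector_Suc_left:
  assumes "a < b" "b \<le> N - 1"
  shows "connector N (Suc a) b * real (N - 1 - a) = connector N a b * real (b - a)"
proof -
  have b: "real (Suc a) * real (b choose Suc a) = real (b - a) * real (b choose a)"
    and N: "real (Suc a) * real ((N - 1) choose Suc a) = real (N - 1 - a) * real ((N - 1) choose a)"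
    by (metis Suc_times_binomial_Suc of_nat_mult)+
  have "connector N (Suc a) b
      = (real (Suc a) * real (b choose Suc a)) / (real (Suc a) * real ((N - 1) choose Suc a))"
    unfolding connector_def by simp
  also have "\<dots> = real (b - a) * real (b choose a) / (real (N - 1 - a) * real ((N - 1) choose a))"
    unfolding b N ..
  finally show ?thesis
    using assms by (simp add: connector_def)
qed

lemma connector_1_left: "connector N 1 b = real b / real (N - 1)"
  by (simp add: connector_def)

lemma connector_last:
  assumes "a \<le> N - 1" shows "connector N a (N - 1) = 1"
  using assms by (simp add: connector_def)

lemma sum_connector_div:
  assumes "1 \<le> a" "a \<le> b"
  shows "(\<Sum>c=a..b. connector N a c / real c) = connector N a b / real a"
  using assms(2)
proof (induction b rule: dec_induct)
  case base
  then show ?case by simp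
next
  case (step b)
  have rec: "connector N a (Suc b) * (real (Suc b) - real a) = connector N a b * real (Suc b)"
    using connector_Suc_right[of N a b] step by (simp add: of_nat_diff)
  have pos: "real a > 0" "real (Suc b) > 0" using assms(1) by auto
  have "connector N a b / real a + connector N a (Suc b) / real (Suc b)
      = (connector N a b * real (Suc b) + connector N a (Suc b) * real a) / (real a * real (Suc b))"
    using pos by (simp add: add_frac_eq)
  also have "\<dots> = connector N a (Suc b) * real (Suc b) / (real a * real (Suc b))"
    using rec by (simp add: algebra_simps)
  also have "\<dots> = connector N a (Suc b) / real a"
    using pos by simp
  finally have "connector N a b / real a + connector N a (Suc b) / real (Suc b)
      = connector N a (Suc b) / real a" .
  then show ?case using step by (simp add: atLeastAtMostSuc_conv)
qed

lemma sum_connector_left: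
  assumes "1 \<le> a" "a \<le> b" "b \<le> N - 1"
  shows "(\<Sum>c=a..b. connector N c b) = connector N a b * (real N - real a) / (real N - real b)"
  using assms
proof (induction "b - a" arbitrary: a)
  case 0
  then show ?case by simp
next
  case (Suc d)
  then have ab: "a < b" by simp
  have "{a..b} = insert a {Suc a..b}" using ab by auto
  then have "(\<Sum>c=a..b. connector N c b) = connector N a b + (\<Sum>c=Suc a..b. connector N c b)" by simp
  also have "(\<Sum>c=Suc a..b. connector N c b)
      = connector N (Suc a) b * (real N - real (Suc a)) / (real N - real b)"
    using Suc by simp
  also have "connector N (Suc a) b * (real N - real (Suc a)) = connector N a b * (real b - real a)"
    using connector_Suc_left[OF ab Suc(5)] ab Suc(5) by (simp add: of_nat_diff)
  moreover have "real N - real b > 0" using Suc(5) ab by linarith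
  ultimately show ?case by (simp add: field_simps)
qed

lemma sum_triangle_swap:
  fixes F :: "nat \<Rightarrow> nat \<Rightarrow> 'a::comm_monoid_add"
  shows "(\<Sum>c=a..M. \<Sum>b=c..M. F c b) = (\<Sum>b=a..M. \<Sum>c=a..b. F c b)"
proof -
  have "(\<Sum>c=a..M. \<Sum>b=c..M. F c b) = (\<Sum>c=a..M. \<Sum>b\<in>{y \<in> {a..M}. c \<le> y}. F c b)"
    by (intro sum.cong) auto
  also have "\<dots> = (\<Sum>b=a..M. \<Sum>c\<in>{x \<in> {a..M}. x \<le> b}. F c b)"
    by (rule sum.swap_restrict) auto
  also have "\<dots> = (\<Sum>b=a..M. \<Sum>c=a..b. F c b)"
    by (intro sum.cong) auto
  finally show ?thesis .
qed

lemma sum_triangle_swap_strict: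
  fixes F :: "nat \<Rightarrow> nat \<Rightarrow> 'a::comm_monoid_add"
  shows "(\<Sum>c=a..M. \<Sum>b\<in>{c<..M}. F c b) = (\<Sum>b\<in>{a<..M}. \<Sum>c=a..<b. F c b)"
proof -
  have "(\<Sum>c=a..M. \<Sum>b\<in>{c<..M}. F c b) = (\<Sum>c=a..M. \<Sum>b\<in>{y \<in> {a<..M}. c < y}. F c b)"
    by (intro sum.cong) auto
  also have "\<dots> = (\<Sum>b\<in>{a<..M}. \<Sum>c\<in>{x \<in> {a..M}. x < b}. F c b)"
    by (rule sum.swap_restrict) auto
  also have "\<dots> = (\<Sum>b\<in>{a<..M}. \<Sum>c=a..<b. F c b)"
    by (intro sum.cong) auto
  finally show ?thesis .
qed

definition sum_from :: "nat \<Rightarrow> (nat \<Rightarrow> real) \<Rightarrow> nat \<Rightarrow> real" where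
  "sum_from N f x = (\<Sum>y=x..N-1. f y)"

definition sum_above :: "nat \<Rightarrow> (nat \<Rightarrow> real) \<Rightarrow> nat \<Rightarrow> real" where
  "sum_above N f x = (\<Sum>y\<in>{x<..N-1}. f y)"

definition div_arg :: "(nat \<Rightarrow> real) \<Rightarrow> nat \<Rightarrow> real" where
  "div_arg f x = f x / real x"

definition star_step :: "nat \<Rightarrow> (nat \<Rightarrow> real) \<Rightarrow> nat \<Rightarrow> real" where
  "star_step N f = div_arg (sum_from N f)"

definition connector_sum :: "nat \<Rightarrow> (nat \<Rightarrow> real) \<Rightarrow> nat \<Rightarrow> real" where
  "connector_sum N f a = (\<Sum>b=a..N-1. connector N a b * f b)"

definition transfer_sum :: "nat \<Rightarrow> (nat \<Rightarrow> real) \<Rightarrow> nat \<Rightarrow> real" where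
  "transfer_sum N g a = (\<Sum>b=a..N-1. connector N a b * ((real N - real b) / real b) * g b)"

lemma sum_from_eq_add_sum_above:
  "x \<le> N - 1 \<Longrightarrow> sum_from N f x = f x + sum_above N f x"
  unfolding sum_from_def sum_above_def by (simp add: atLeastAtMost_insertL[symmetric] atLeastSucAtMost_greaterThanAtMost)

lemma sum_from_cong:
  "(\<And>y. y \<in> {x..N-1} \<Longrightarrow> f y = g y) \<Longrightarrow> sum_from N f x = sum_from N g x"
  unfolding sum_from_def by (intro sum.cong) auto

lemma sum_above_cong:
  "(\<And>y. y \<in> {x<..N-1} \<Longrightarrow> f y = g y) \<Longrightarrow> sum_above N f x = sum_above N g x"
  unfolding sum_above_def by (intro sum.cong) auto

lemma connector_sum_cong:
  "(\<And>b. b \<in> {a..N-1} \<Longrightarrow> f b = g b) \<Longrightarrow> connector_sum N f a = connector_sum N g a"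
  unfolding connector_sum_def by (intro sum.cong) auto

lemma connector_sum_star_step:
  assumes "1 \<le> a" "a \<le> N - 1"
  shows "connector_sum N (star_step N f) a = connector_sum N f a / real a"
proof -
  have "connector_sum N (star_step N f) a
      = (\<Sum>c=a..N-1. \<Sum>b=c..N-1. connector N a c / real c * f b)"
    unfolding connector_sum_def star_step_def div_arg_def sum_from_def
    by (simp add: sum_distrib_left sum_divide_distrib)
  also have "\<dots> = (\<Sum>b=a..N-1. (\<Sum>c=a..b. connector N a c / real c) * f b)"
    by (simp add: sum_triangle_swap sum_distrib_right)
  also have "\<dots> = (\<Sum>b=a..N-1. connector N a b / real a * f b)"
    using assms by (intro sum.cong) (simp_all add: sum_connector_div)
  also have "\<dots> = connector_sum N f a / real a"
    unfolding connector_sum_def by (simp add: sum_divide_distrib)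
  finally show ?thesis .
qed

lemma connector_sum_star_step_pow:
  assumes "1 \<le> a" "a \<le> N - 1"
  shows "connector_sum N ((star_step N ^^ j) f) a = connector_sum N f a / real a ^ j"
  by (induction j) (simp_all add: connector_sum_star_step[OF assms])

lemma connector_Suc_Suc:
  assumes "a \<le> b" "Suc b \<le> N - 1"
  shows "connector N (Suc a) (Suc b) * (real N - real (Suc a)) / real (Suc b) = connector N a b"
proof -
  have "connector N (Suc a) (Suc b) * (real N - real (Suc a)) = connector N a (Suc b) * real (Suc b - a)"
    using connector_Suc_left[of a "Suc b" N] assms by (simp add: of_nat_diff)
  also have "\<dots> = connector N a b * real (Suc b)"
    by (rule connector_Suc_right)
  finally show ?thesis by simp
qed

lemma sum_above_transfer_sum:
  assumes "1 \<le> a" "a \<le> N - 1"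
  shows "sum_above N (transfer_sum N f) a / real a = connector_sum N (div_arg (sum_above N f)) a"
proof -
  have "sum_above N (transfer_sum N f) a / real a
      = (\<Sum>c=Suc a..N-1. \<Sum>b=c..N-1. connector N c b * ((real N - real b) / real b) * f b) / real a"
    unfolding sum_above_def transfer_sum_def by (simp add: atLeastSucAtMost_greaterThanAtMost)
  also have "\<dots> = (\<Sum>b=Suc a..N-1.
      (\<Sum>c=Suc a..b. connector N c b) * ((real N - real b) / real b) * f b / real a)"
    by (simp add: sum_triangle_swap sum_distrib_right sum_divide_distrib)
  also have "\<dots> = (\<Sum>b=Suc a..N-1. connector N a (b - 1) / real a * f b)"
  proof (intro sum.cong refl)
    fix b assume b: "b \<in> {Suc a..N-1}"
    then have "real N - real b > 0" by auto
    moreover have "connector N (Suc a) b * (real N - real (Suc a)) / real b = connector N a (b - 1)"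
      using connector_Suc_Suc[of a "b - 1" N] b by auto
    ultimately show "(\<Sum>c=Suc a..b. connector N c b) * ((real N - real b) / real b) * f b / real a
        = connector N a (b - 1) / real a * f b"
      using b sum_connector_left[of "Suc a" b N] by simp
  qed
  also have "\<dots> = (\<Sum>b\<in>{a<..N-1}. \<Sum>c=a..<b. connector N a c / real c * f b)"
  proof (intro sum.cong)
    fix b assume b: "b \<in> {a<..N-1}"
    then have "{a..<b} = {a..b-1}" "a \<le> b - 1" by auto
    then have "(\<Sum>c=a..<b. connector N a c / real c * f b) = (\<Sum>c=a..b-1. connector N a c / real c) * f b"
      by (simp only: sum_distrib_right)
    then show "connector N a (b - 1) / real a * f b = (\<Sum>c=a..<b. connector N a c / real c * f b)"
      using sum_connector_div[of a "b - 1" N] assms \<open>a \<le> b - 1\<close> by simp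
  qed auto
  also have "\<dots> = connector_sum N (div_arg (sum_above N f)) a"
    unfolding connector_sum_def div_arg_def sum_above_def
    by (simp add: sum_triangle_swap_strict[symmetric] sum_distrib_left sum_divide_distrib)
  finally show ?thesis .
qed

lemma sum_from_transfer_sum:
  assumes "1 \<le> a" "a \<le> N - 1"
  shows "sum_from N (transfer_sum N f) a / (real N - real a) = connector_sum N (div_arg f) a"
proof -
  have "sum_from N (transfer_sum N f) a / (real N - real a)
      = (\<Sum>b=a..N-1. (\<Sum>c=a..b. connector N c b) * ((real N - real b) / real b) * f b
          / (real N - real a))"
    unfolding sum_from_def transfer_sum_def
    by (simp add: sum_triangle_swap sum_distrib_right sum_divide_distrib)
  also have "\<dots> = connector_sum N (div_arg f) a"
    unfolding connector_sum_def div_arg_def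
  proof (intro sum.cong refl)
    fix b assume b: "b \<in> {a..N-1}"
    have "real N - real a > 0" "real N - real b > 0" using assms b by auto
    then show "(\<Sum>c=a..b. connector N c b) * ((real N - real b) / real b) * f b / (real N - real a)
        = connector N a b * (f b / real b)"
      using b assms sum_connector_left[of a b N] by simp
  qed
  finally show ?thesis .
qed

lemma transfer_sum_step_one:
  assumes "1 \<le> a" "a \<le> N - 1"
  shows "sum_from N (transfer_sum N f) a / (real N - real a) + sum_above N (transfer_sum N f) a / real a
       = connector_sum N (div_arg (sum_from N f)) a"
proof -
  have "connector_sum N (div_arg (sum_from N f)) a
      = connector_sum N (\<lambda>b. div_arg f b + div_arg (sum_above N f) b) a"
    by (rule connector_sum_cong) (simp add: sum_from_eq_add_sum_above div_arg_def add_divide_distrib)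
  also have "\<dots> = connector_sum N (div_arg f) a + connector_sum N (div_arg (sum_above N f)) a"
    unfolding connector_sum_def by (simp add: sum.distrib distrib_left)
  finally show ?thesis
    using sum_from_transfer_sum[OF assms] sum_above_transfer_sum[OF assms] by simp
qed

definition block_fun :: "nat \<Rightarrow> nat \<Rightarrow> (nat \<Rightarrow> real) \<Rightarrow> nat \<Rightarrow> real" where
  "block_fun N k g x = real x / (real N - real x) * (star_step N ^^ (k - 1)) (div_arg g) x"

lemma transfer_sum_block_fun:
  assumes "1 \<le> a"
  shows "transfer_sum N (block_fun N k g) a = connector_sum N ((star_step N ^^ (k - 1)) (div_arg g)) a"
  unfolding transfer_sum_def connector_sum_def block_fun_def
proof (intro sum.cong refl)
  fix b assume "b \<in> {a..N-1}"
  then have "real N - real b > 0" "real b > 0" using assms by auto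
  then show "connector N a b * ((real N - real b) / real b)
        * (real b / (real N - real b) * (star_step N ^^ (k - 1)) (div_arg g) b)
      = connector N a b * (star_step N ^^ (k - 1)) (div_arg g) b"
    by simp
qed

lemma connector_sum_div_arg_one:
  assumes "1 \<le> a" "a \<le> N - 1"
  shows "connector_sum N (div_arg (\<lambda>_. 1)) a = 1 / real a"
  using sum_connector_div[of a "N - 1" N] connector_last[of a N] assms
  by (simp add: connector_sum_def div_arg_def)

lemma sum_transfer_sum: "(\<Sum>a=1..N-1. transfer_sum N g a) = (\<Sum>b=1..N-1. g b)"
proof -
  have "(\<Sum>a=1..N-1. transfer_sum N g a)
      = (\<Sum>b=1..N-1. (\<Sum>a=1..b. connector N a b) * ((real N - real b) / real b) * g b)"
    unfolding transfer_sum_def by (simp only: sum_triangle_swap sum_distrib_right)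
  also have "\<dots> = (\<Sum>b=1..N-1. g b)"
  proof (intro sum.cong refl)
    fix b assume b: "b \<in> {1..N-1}"
    then have "real N - real b > 0" "real b > 0" "real (N - 1) = real N - 1" by auto
    then show "(\<Sum>a=1..b. connector N a b) * ((real N - real b) / real b) * g b = g b"
      using b sum_connector_left[of 1 b N] connector_1_left[of N b] by simp
  qed
  finally show ?thesis .
qed

text \<open>The left-hand side with n_1 = x, and the right-hand side with n_{1,1} = x.\<close>

fun left_fun :: "nat \<Rightarrow> nat list \<Rightarrow> nat \<Rightarrow> real" where
  "left_fun N [] = (\<lambda>_. 0)"
| "left_fun N [k] = (\<lambda>x. 1 / real x ^ k)"
| "left_fun N (k # k' # ks) = (\<lambda>x.
     (if k = 1 then sum_from N (left_fun N (k' # ks)) x / (real N - real x) else 0)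
     + sum_above N (left_fun N (k' # ks)) x / real x ^ k)"

fun right_fun :: "nat \<Rightarrow> nat list \<Rightarrow> nat \<Rightarrow> real" where
  "right_fun N [] = (\<lambda>_. 0)"
| "right_fun N [k] = block_fun N k (\<lambda>_. 1)"
| "right_fun N (k # k' # ks) =
     block_fun N k ((if k = 1 then sum_from N else sum_above N) (right_fun N (k' # ks)))"

lemma left_fun_eq_transfer_sum_right_fun:
  assumes "ks \<noteq> []" "\<forall>k\<in>set ks. k > 0" "a \<in> {1..N-1}"
  shows "left_fun N ks a = transfer_sum N (right_fun N ks) a"
  using assms
proof (induction N ks arbitrary: a rule: left_fun.induct)
  case (1 N)
  then show ?case by simp
next
  case (2 N k)
  then have "transfer_sum N (right_fun N [k]) a = 1 / real a / real a ^ (k - 1)"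
    by (simp add: transfer_sum_block_fun connector_sum_star_step_pow connector_sum_div_arg_one)
  also have "\<dots> = 1 / real a ^ k"
    using 2 by (cases k) (simp_all add: field_simps)
  finally show ?case by simp
next
  case (3 N k k' ks)
  let ?g = "right_fun N (k' # ks)"
  have a: "1 \<le> a" "a \<le> N - 1" using 3 by auto
  have IH: "left_fun N (k' # ks) y = transfer_sum N ?g y" if "y \<in> {a..N-1}" for y
    using 3 that by (cases "k = 1") auto
  then have geq: "sum_from N (left_fun N (k' # ks)) a = sum_from N (transfer_sum N ?g) a"
    and gt: "sum_above N (left_fun N (k' # ks)) a = sum_above N (transfer_sum N ?g) a"
    by (auto intro: sum_from_cong sum_above_cong)
  show ?case
  proof (cases "k = 1")
    case True
    then show ?thesis
      using transfer_sum_step_one[OF a, of ?g] a geq gt by (simp add: transfer_sum_block_fun)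
  next
    case False
    then have "k > 1" using 3 by auto
    then have "transfer_sum N (right_fun N (k # k' # ks)) a
        = connector_sum N (div_arg (sum_above N ?g)) a / real a ^ (k - 1)"
      using a by (simp add: transfer_sum_block_fun connector_sum_star_step_pow)
    also have "\<dots> = sum_above N (transfer_sum N ?g) a / real a / real a ^ (k - 1)"
      by (simp add: sum_above_transfer_sum[OF a])
    also have "\<dots> = sum_above N (transfer_sum N ?g) a / real a ^ k"
      using \<open>k > 1\<close> by (cases k) (simp_all add: field_simps)
    finally show ?thesis using False gt by simp
  qed
qed

section \<open>Chain sums\<close>

definition chain_set :: "nat \<Rightarrow> (nat \<Rightarrow> 'v set) \<Rightarrow> (nat \<Rightarrow> 'v \<Rightarrow> 'v \<Rightarrow> bool) \<Rightarrow> (nat \<Rightarrow> 'v) set" where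
  "chain_set r V R = {n \<in> PiE {1..r} V. \<forall>i\<in>{1..r-1}. R i (n i) (n (Suc i))}"

definition chain_sum ::
    "nat \<Rightarrow> (nat \<Rightarrow> 'v set) \<Rightarrow> (nat \<Rightarrow> 'v \<Rightarrow> 'v \<Rightarrow> bool) \<Rightarrow> (nat \<Rightarrow> 'v \<Rightarrow> real) \<Rightarrow> 'v \<Rightarrow> real" where
  "chain_sum r V R w x = (\<Sum>n\<in>{n \<in> chain_set r V R. n 1 = x}. \<Prod>i=1..r. w i (n i))"

lemma finite_chain_set: "(\<And>i. finite (V i)) \<Longrightarrow> finite (chain_set r V R)"
  unfolding chain_set_def by (rule finite_subset[OF _ finite_PiE[of "{1..r}" V]]) auto

lemma chain_sum_1:
  assumes "x \<in> V 1"
  shows "chain_sum 1 V R w x = w 1 x"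
proof -
  have "{n \<in> chain_set 1 V R. n 1 = x} = {\<lambda>i. if i = 1 then x else undefined}"
    using assms by (auto simp: chain_set_def PiE_iff extensional_def)
  then show ?thesis unfolding chain_sum_def by simp
qed

lemma chain_Cons_in_chain_set:
  assumes m: "m \<in> chain_set r (\<lambda>i. V (Suc i)) (\<lambda>i. R (Suc i))" and "x \<in> V 1" "R 1 x (m 1)"
  shows "(\<lambda>i. if i = 1 then x else m (i - 1)) \<in> chain_set (Suc r) V R"
  unfolding chain_set_def
proof (safe intro!: PiE_I)
  fix i assume i: "i \<in> {1..Suc r}"
  show "(if i = 1 then x else m (i - 1)) \<in> V i"
  proof (cases "i = 1")
    case False
    then have "i - 1 \<in> {1..r}" "Suc (i - 1) = i" using i by auto
    moreover have "m \<in> PiE {1..r} (\<lambda>i. V (Suc i))" using m by (simp add: chain_set_def)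
    ultimately show ?thesis using False PiE_mem[of m "{1..r}" "\<lambda>i. V (Suc i)" "i - 1"] by simp
  qed (use assms in simp)
next
  fix i assume "i \<notin> {1..Suc r}"
  then have "i \<noteq> 1" "i - 1 \<notin> {1..r}" by auto
  then show "(if i = 1 then x else m (i - 1)) = undefined"
    using m by (auto simp: chain_set_def PiE_def extensional_def)
next
  fix i assume i: "i \<in> {1..Suc r - 1}"
  show "R i (if i = 1 then x else m (i - 1)) (if Suc i = 1 then x else m (Suc i - 1))"
  proof (cases "i = 1")
    case False
    then have "i - 1 \<in> {1..r - 1}" "Suc (i - 1) = i" using i by auto
    then show ?thesis using False m by (auto simp: chain_set_def dest!: bspec[of _ _ "i - 1"])
  qed (use assms in simp)
qed

lemma restrict_Suc_in_chain_set:
  "n \<in> chain_set (Suc r) V R \<Longrightarrow> (\<lambda>i\<in>{1..r}. n (Suc i)) \<in> chain_set r (\<lambda>i. V (Suc i)) (\<lambda>i. R (Suc i))"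
  by (auto simp: chain_set_def)

lemma chain_set_undefined: "n \<in> chain_set r V R \<Longrightarrow> i \<notin> {1..r} \<Longrightarrow> n i = undefined"
  by (auto simp: chain_set_def PiE_def extensional_def)

lemma bij_betw_chain_Cons:
  assumes "1 \<le> r" "x \<in> V 1"
  shows "bij_betw (\<lambda>(y, m) i. if i = 1 then x else m (i - 1))
      (SIGMA y:{y \<in> V (Suc 1). R 1 x y}. {m \<in> chain_set r (\<lambda>i. V (Suc i)) (\<lambda>i. R (Suc i)). m 1 = y})
      {n \<in> chain_set (Suc r) V R. n 1 = x}"
proof (rule bij_betw_byWitness[where f' = "\<lambda>n. (n (Suc 1), \<lambda>i\<in>{1..r}. n (Suc i))"])
  show "\<forall>p\<in>(SIGMA y:{y \<in> V (Suc 1). R 1 x y}. {m \<in> chain_set r (\<lambda>i. V (Suc i)) (\<lambda>i. R (Suc i)). m 1 = y}).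
      (\<lambda>n. (n (Suc 1), \<lambda>i\<in>{1..r}. n (Suc i))) ((\<lambda>(y, m) i. if i = 1 then x else m (i - 1)) p) = p"
    by (auto simp: fun_eq_iff intro!: chain_set_undefined[symmetric])
  show "\<forall>n\<in>{n \<in> chain_set (Suc r) V R. n 1 = x}.
      (\<lambda>(y, m) i. if i = 1 then x else m (i - 1)) ((\<lambda>n. (n (Suc 1), \<lambda>i\<in>{1..r}. n (Suc i))) n) = n"
    by (auto simp: fun_eq_iff intro!: chain_set_undefined[symmetric])
  show "(\<lambda>(y, m) i. if i = 1 then x else m (i - 1)) `
      (SIGMA y:{y \<in> V (Suc 1). R 1 x y}. {m \<in> chain_set r (\<lambda>i. V (Suc i)) (\<lambda>i. R (Suc i)). m 1 = y})
    \<subseteq> {n \<in> chain_set (Suc r) V R. n 1 = x}"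
    using assms(2) chain_Cons_in_chain_set[of _ r V R x] by auto
  show "(\<lambda>n. (n (Suc 1), \<lambda>i\<in>{1..r}. n (Suc i))) ` {n \<in> chain_set (Suc r) V R. n 1 = x}
    \<subseteq> (SIGMA y:{y \<in> V (Suc 1). R 1 x y}. {m \<in> chain_set r (\<lambda>i. V (Suc i)) (\<lambda>i. R (Suc i)). m 1 = y})"
    using assms(1) by (auto intro: restrict_Suc_in_chain_set simp: chain_set_def PiE_iff)
qed

lemma chain_sum_Suc:
  assumes "1 \<le> r" "\<And>i. finite (V i)" "x \<in> V 1"
  shows "chain_sum (Suc r) V R w x = w 1 x *
    (\<Sum>y\<in>{y \<in> V (Suc 1). R 1 x y}. chain_sum r (\<lambda>i. V (Suc i)) (\<lambda>i. R (Suc i)) (\<lambda>i. w (Suc i)) y)"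
proof -
  let ?Y = "{y \<in> V (Suc 1). R 1 x y}"
  let ?M = "\<lambda>y. {m \<in> chain_set r (\<lambda>i. V (Suc i)) (\<lambda>i. R (Suc i)). m 1 = y}"
  let ?cons = "\<lambda>(y, m) i. if i = 1 then x else m (i - 1)"
  have fin: "finite ?Y" "finite (?M y)" for y
    using assms(2) finite_chain_set[of "\<lambda>i. V (Suc i)"] by auto
  have "w 1 x * (\<Sum>y\<in>?Y. chain_sum r (\<lambda>i. V (Suc i)) (\<lambda>i. R (Suc i)) (\<lambda>i. w (Suc i)) y)
      = (\<Sum>p\<in>Sigma ?Y ?M. w 1 x * (\<Prod>i=1..r. w (Suc i) (snd p i)))"
    unfolding chain_sum_def using fin by (simp add: sum_distrib_left sum.Sigma case_prod_beta)
  also have "\<dots> = (\<Sum>p\<in>Sigma ?Y ?M. \<Prod>i=1..Suc r. w i (?cons p i))"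
  proof (intro sum.cong refl)
    fix p :: "'a \<times> (nat \<Rightarrow> 'a)"
    have "(\<Prod>i=1..Suc r. w i (?cons p i)) = w 1 (?cons p 1) * (\<Prod>i=Suc 1..Suc r. w i (?cons p i))"
      by (simp add: prod.atLeast_Suc_atMost)
    also have "\<dots> = w 1 x * (\<Prod>i=1..r. w (Suc i) (snd p i))"
      by (simp only: prod.shift_bounds_cl_Suc_ivl) (simp add: case_prod_beta)
    finally have "(\<Prod>i=1..Suc r. w i (?cons p i)) = w 1 x * (\<Prod>i=1..r. w (Suc i) (snd p i))" .
    then show "w 1 x * (\<Prod>i=1..r. w (Suc i) (snd p i)) = (\<Prod>i=1..Suc r. w i (?cons p i))" ..
  qed
  also have "\<dots> = chain_sum (Suc r) V R w x"
    unfolding chain_sum_def by (rule sum.reindex_bij_betw[OF bij_betw_chain_Cons[where V = V and R = R, OF assms(1,3)]])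
  finally show ?thesis ..
qed

lemma chain_sum_cong:
  assumes "\<And>i. i \<in> {1..r} \<Longrightarrow> V i = V' i"
    and "\<And>i a b. i \<in> {1..r-1} \<Longrightarrow> R i a b = R' i a b"
    and "\<And>i a. i \<in> {1..r} \<Longrightarrow> a \<in> V i \<Longrightarrow> w i a = w' i a"
  shows "chain_sum r V R w x = chain_sum r V' R' w' x"
proof -
  have "chain_set r V R = chain_set r V' R'"
    unfolding chain_set_def using assms(1,2) PiE_cong[of "{1..r}" V V'] by auto
  moreover have "(\<Prod>i=1..r. w i (n i)) = (\<Prod>i=1..r. w' i (n i))" if "n \<in> chain_set r V R" for n
    using that assms(3) by (intro prod.cong) (auto simp: chain_set_def PiE_iff)
  ultimately show ?thesis unfolding chain_sum_def by (intro sum.cong) auto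
qed

lemma sum_chain_set:
  assumes "1 \<le> r" "\<And>i. finite (V i)"
  shows "(\<Sum>n\<in>chain_set r V R. \<Prod>i=1..r. w i (n i)) = (\<Sum>x\<in>V 1. chain_sum r V R w x)"
proof -
  have "(\<lambda>n. n 1) ` chain_set r V R \<subseteq> V 1"
    using assms(1) by (auto simp: chain_set_def PiE_iff)
  then show ?thesis
    unfolding chain_sum_def using assms(2) finite_chain_set[OF assms(2)]
    by (subst sum.group[symmetric]) (auto simp: Collect_conj_eq)
qed

section \<open>The left-hand side\<close>

lemma kk_Cons_Suc: "1 \<le> i \<Longrightarrow> kk (k # ks) (Suc i) = kk ks i"
  unfolding kk_def by (cases i) auto

lemma ones_set_Cons: "ones_set (k # ks) = (if k = 1 then {1} else {}) \<union> Suc ` ones_set ks"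
proof (rule set_eqI)
  fix i
  show "i \<in> ones_set (k # ks) \<longleftrightarrow> i \<in> (if k = 1 then {1} else {}) \<union> Suc ` ones_set ks"
    by (cases i; cases "i - 1") (auto simp: ones_set_def kk_def)
qed

lemma zero_notin_ones_set: "0 \<notin> ones_set ks"
  by (simp add: ones_set_def)

lemma ones_set_subset:
  assumes "admissible ks"
  shows "ones_set ks \<subseteq> {1..length ks - 1}"
proof
  fix i assume "i \<in> ones_set ks"
  then have "i \<in> {1..length ks}" "kk ks i = 1" by (auto simp: ones_set_def)
  moreover have "kk ks (length ks) = last ks"
    using assms by (simp add: admissible_def kk_def last_conv_nth)
  ultimately show "i \<in> {1..length ks - 1}"
    using assms by (cases "i = length ks") (auto simp: admissible_def)
qed

lemma sum_Pow_image_Suc: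
  fixes F :: "nat set \<Rightarrow> 'a::comm_monoid_add"
  shows "(\<Sum>A\<in>Pow (Suc ` S). F A) = (\<Sum>B\<in>Pow S. F (Suc ` B))"
proof -
  have "Pow (Suc ` S) = image Suc ` Pow S" by (rule image_Pow_surj[symmetric]) simp
  moreover have "inj_on (image Suc) (Pow S)" by (rule inj_on_image_Pow) simp
  ultimately show ?thesis by (simp add: sum.reindex)
qed

lemma sum_Pow_insert:
  fixes F :: "'b set \<Rightarrow> 'a::comm_monoid_add"
  assumes "finite S" "a \<notin> S"
  shows "(\<Sum>A\<in>Pow (insert a S). F A) = (\<Sum>A\<in>Pow S. F A) + (\<Sum>A\<in>Pow S. F (insert a A))"
proof -
  have "inj_on (insert a) (Pow S)"
    using assms(2) by (auto simp: inj_on_def)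
  then show ?thesis
    unfolding Pow_insert using assms by (subst sum.union_disjoint) (auto simp: sum.reindex)
qed

definition left_rel :: "nat set \<Rightarrow> nat \<Rightarrow> nat \<Rightarrow> nat \<Rightarrow> bool" where
  "left_rel A i a b \<longleftrightarrow> (if i \<in> A then a \<le> b else a < b)"

definition left_weight :: "nat \<Rightarrow> nat list \<Rightarrow> nat set \<Rightarrow> nat \<Rightarrow> nat \<Rightarrow> real" where
  "left_weight N ks A i a = (if i \<in> A then 1 / (real N - real a) else 1 / real a ^ kk ks i)"

definition left_chain :: "nat \<Rightarrow> nat list \<Rightarrow> nat \<Rightarrow> real" where
  "left_chain N ks x = (\<Sum>A\<in>Pow (ones_set ks).
     chain_sum (length ks) (\<lambda>_. {1..N-1}) (left_rel A) (left_weight N ks A) x)"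

lemma chain_sum_left_Cons:
  assumes "x \<in> {1..N-1}" "ks \<noteq> []" "\<And>i. 1 \<le> i \<Longrightarrow> Suc i \<in> A \<longleftrightarrow> i \<in> B"
  shows "chain_sum (length (k # ks)) (\<lambda>_. {1..N-1}) (left_rel A) (left_weight N (k # ks) A) x
    = left_weight N (k # ks) A 1 x * (\<Sum>y\<in>{y \<in> {1..N-1}. left_rel A 1 x y}.
        chain_sum (length ks) (\<lambda>_. {1..N-1}) (left_rel B) (left_weight N ks B) y)"
proof -
  have "1 \<le> length ks" using assms(2) by (cases ks) auto
  then have "chain_sum (Suc (length ks)) (\<lambda>_. {1..N-1}) (left_rel A) (left_weight N (k # ks) A) x
    = left_weight N (k # ks) A 1 x * (\<Sum>y\<in>{y \<in> {1..N-1}. left_rel A 1 x y}.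
        chain_sum (length ks) (\<lambda>_. {1..N-1}) (\<lambda>i. left_rel A (Suc i)) (\<lambda>i. left_weight N (k # ks) A (Suc i)) y)"
    using assms(1) by (intro chain_sum_Suc) auto
  also have "\<dots> = left_weight N (k # ks) A 1 x * (\<Sum>y\<in>{y \<in> {1..N-1}. left_rel A 1 x y}.
        chain_sum (length ks) (\<lambda>_. {1..N-1}) (left_rel B) (left_weight N ks B) y)"
    using assms(3) by (intro arg_cong[where f = "\<lambda>t. _ * t"] sum.cong refl chain_sum_cong)
      (auto simp: left_rel_def left_weight_def kk_Cons_Suc)
  finally show ?thesis by simp
qed

lemma sum_Pow_chain_sum_left_Cons:
  assumes x: "x \<in> {1..N-1}" and "ks \<noteq> []"
  shows "(\<Sum>B\<in>Pow (ones_set ks).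
      chain_sum (length (k # ks)) (\<lambda>_. {1..N-1}) (left_rel (if c then insert 1 (Suc ` B) else Suc ` B))
        (left_weight N (k # ks) (if c then insert 1 (Suc ` B) else Suc ` B)) x)
    = (if c then sum_from N (left_chain N ks) x / (real N - real x)
       else sum_above N (left_chain N ks) x / real x ^ k)"
proof -
  let ?A = "\<lambda>B. if c then insert 1 (Suc ` B) else Suc ` B"
  let ?H = "\<lambda>B. chain_sum (length ks) (\<lambda>_. {1..N-1}) (left_rel B) (left_weight N ks B)"
  define w where "w = (if c then 1 / (real N - real x) else 1 / real x ^ k)"
  define Y where "Y = (if c then {x..N-1} else {x<..N-1})"
  have "chain_sum (length (k # ks)) (\<lambda>_. {1..N-1}) (left_rel (?A B)) (left_weight N (k # ks) (?A B)) x
      = w * (\<Sum>y\<in>Y. ?H B y)" if "B \<in> Pow (ones_set ks)" for B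
  proof -
    have "1 \<notin> Suc ` B" using that zero_notin_ones_set by auto
    moreover have "{y \<in> {1..N-1}. left_rel (?A B) 1 x y} = Y"
      using x \<open>1 \<notin> Suc ` B\<close> by (auto simp: Y_def left_rel_def)
    ultimately show ?thesis
      using assms by (subst chain_sum_left_Cons[where B = B]) (auto simp: w_def left_weight_def kk_def)
  qed
  then have "(\<Sum>B\<in>Pow (ones_set ks). chain_sum (length (k # ks)) (\<lambda>_. {1..N-1}) (left_rel (?A B))
        (left_weight N (k # ks) (?A B)) x) = w * (\<Sum>y\<in>Y. left_chain N ks y)"
    unfolding left_chain_def by (simp add: sum_distrib_left sum.swap[of _ Y])
  then show ?thesis by (simp add: w_def Y_def sum_from_def sum_above_def)
qed

lemma left_chain_Cons:
  assumes "x \<in> {1..N-1}" "ks \<noteq> []"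
  shows "left_chain N (k # ks) x
    = (if k = 1 then sum_from N (left_chain N ks) x / (real N - real x) else 0)
      + sum_above N (left_chain N ks) x / real x ^ k"
proof -
  have fin: "finite (Suc ` ones_set ks)" by (simp add: ones_set_def)
  have "1 \<notin> Suc ` ones_set ks" using zero_notin_ones_set by auto
  then show ?thesis
    using sum_Pow_chain_sum_left_Cons[OF assms, where c = False and k = k]
      sum_Pow_chain_sum_left_Cons[OF assms, where c = True and k = k]
    by (cases "k = 1") (simp_all add: left_chain_def ones_set_Cons sum_Pow_insert[OF fin] sum_Pow_image_Suc)
qed

lemma left_chain_eq_left_fun:
  assumes "ks \<noteq> []" "last ks \<noteq> 1" "x \<in> {1..N-1}"
  shows "left_chain N ks x = left_fun N ks x"
  using assms
proof (induction N ks arbitrary: x rule: left_fun.induct)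
  case (1 N)
  then show ?case by simp
next
  case (2 N k)
  then have "ones_set [k] = {}" by (auto simp: ones_set_def kk_def)
  moreover have "chain_sum 1 (\<lambda>_. {1..N-1}) (left_rel {}) (left_weight N [k] {}) x
      = left_weight N [k] {} 1 x"
    using 2 by (intro chain_sum_1) simp
  ultimately show ?case by (simp add: left_chain_def left_weight_def kk_def)
next
  case (3 N k k' ks)
  have IH: "left_chain N (k' # ks) y = left_fun N (k' # ks) y" if "y \<in> {x..N-1}" for y
    using 3 that by auto
  then have "sum_from N (left_chain N (k' # ks)) x = sum_from N (left_fun N (k' # ks)) x"
    and "sum_above N (left_chain N (k' # ks)) x = sum_above N (left_fun N (k' # ks)) x"
    by (auto intro: sum_from_cong sum_above_cong)
  then show ?case using 3 by (simp add: left_chain_Cons)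
qed

lemma S_set_eq_chain_set:
  "A \<subseteq> {1..r-1} \<Longrightarrow> S_set r N A = chain_set r (\<lambda>_. {1..N-1}) (left_rel A)"
  unfolding S_set_def chain_set_def left_rel_def by auto

lemma prod_left_weight:
  assumes "A \<subseteq> {1..r}"
  shows "(\<Prod>i\<in>A. 1 / (real N - real (n i))) * (\<Prod>i\<in>{1..r} - A. 1 / real (n i) ^ kk ks i)
    = (\<Prod>i=1..r. left_weight N ks A i (n i))"
proof -
  have "{1..r} \<inter> A = A" using assms by auto
  then show ?thesis
    unfolding left_weight_def by (subst prod.If_cases) (simp_all add: Diff_eq)
qed

lemma zeta_diamond_eq_sum_left_chain:
  assumes "admissible ks"
  shows "zeta_diamond N ks = (\<Sum>x=1..N-1. left_chain N ks x)"
proof -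
  let ?r = "length ks"
  have "1 \<le> ?r" using assms by (cases ks) (auto simp: admissible_def)
  have per_A: "(\<Sum>n\<in>S_set ?r N A. (\<Prod>i\<in>A. 1 / (real N - real (n i))) * (\<Prod>i\<in>{1..?r} - A. 1 / real (n i) ^ kk ks i))
      = (\<Sum>x=1..N-1. chain_sum ?r (\<lambda>_. {1..N-1}) (left_rel A) (left_weight N ks A) x)"
    if "A \<in> Pow (ones_set ks)" for A
  proof -
    have "A \<subseteq> {1..?r-1}" using that ones_set_subset[OF assms] by auto
    moreover from this have "A \<subseteq> {1..?r}" by (auto simp: subset_iff)
    ultimately show ?thesis
      using prod_left_weight[of A ?r N] sum_chain_set[OF \<open>1 \<le> ?r\<close>, where V = "\<lambda>_. {1..N-1}" and R = "left_rel A" and w = "left_weight N ks A"]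
      by (auto simp: S_set_eq_chain_set prod_left_weight)
  qed
  have "zeta_diamond N ks = (\<Sum>A\<in>Pow (ones_set ks). \<Sum>x=1..N-1.
      chain_sum ?r (\<lambda>_. {1..N-1}) (left_rel A) (left_weight N ks A) x)"
    unfolding zeta_diamond_def Let_def using per_A by (intro sum.cong) auto
  also have "\<dots> = (\<Sum>x=1..N-1. left_chain N ks x)"
    unfolding left_chain_def by (rule sum.swap)
  finally show ?thesis .
qed

section \<open>The right-hand side\<close>

definition block :: "nat \<Rightarrow> nat \<Rightarrow> (nat \<Rightarrow> nat) set" where
  "block N k = chain_set k (\<lambda>_. {1..N-1}) (\<lambda>_. (\<le>))"

definition block_weight :: "nat \<Rightarrow> nat \<Rightarrow> (nat \<Rightarrow> nat) \<Rightarrow> real" where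
  "block_weight N k b = 1 / ((real N - real (b 1)) * (\<Prod>j=2..k. real (b j)))"

definition star_weight :: "nat \<Rightarrow> (nat \<Rightarrow> real) \<Rightarrow> nat \<Rightarrow> nat \<Rightarrow> real" where
  "star_weight k g j a = (if j = k then g a else 1) / real a"

lemma chain_sum_star_weight:
  assumes "x \<in> {1..N-1}"
  shows "chain_sum (Suc k) (\<lambda>_. {1..N-1}) (\<lambda>_. (\<le>)) (star_weight (Suc k) g) x
    = (star_step N ^^ k) (div_arg g) x"
  using assms
proof (induction k arbitrary: x)
  case 0
  have "chain_sum 1 (\<lambda>_. {1..N-1}) (\<lambda>_. (\<le>)) (star_weight 1 g) x = star_weight 1 g 1 x"
    using 0 by (intro chain_sum_1) simp
  also have "\<dots> = (star_step N ^^ 0) (div_arg g) x"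
    by (simp add: star_weight_def div_arg_def)
  finally show ?case by simp
next
  case (Suc k)
  have "star_weight (Suc (Suc k)) g (Suc i) = star_weight (Suc k) g i" for i
    by (simp add: star_weight_def fun_eq_iff)
  moreover have "{y \<in> {1..N-1}. x \<le> y} = {x..N-1}" using Suc by auto
  ultimately have "chain_sum (Suc (Suc k)) (\<lambda>_. {1..N-1}) (\<lambda>_. (\<le>)) (star_weight (Suc (Suc k)) g) x
      = 1 / real x * (\<Sum>y=x..N-1. chain_sum (Suc k) (\<lambda>_. {1..N-1}) (\<lambda>_. (\<le>)) (star_weight (Suc k) g) y)"
    using Suc by (simp add: chain_sum_Suc star_weight_def)
  also have "\<dots> = 1 / real x * (\<Sum>y=x..N-1. (star_step N ^^ k) (div_arg g) y)"
    using Suc by (intro arg_cong[where f = "\<lambda>t. _ * t"] sum.cong) auto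
  also have "\<dots> = (star_step N ^^ Suc k) (div_arg g) x"
    by (simp only: funpow.simps comp_apply star_step_def div_arg_def sum_from_def) simp
  finally show ?case .
qed

lemma sum_block_weight:
  assumes "1 \<le> k" "x \<in> {1..N-1}"
  shows "(\<Sum>b\<in>{b \<in> block N k. b 1 = x}. block_weight N k b * g (b k)) = block_fun N k g x"
proof -
  have "block_weight N k b * g (b k) = real x / (real N - real x) * (\<Prod>j=1..k. star_weight k g j (b j))"
    if "b 1 = x" for b
  proof -
    have "(\<Prod>j=1..k. star_weight k g j (b j)) = (\<Prod>j=1..k. if j = k then g (b j) else 1) / (\<Prod>j=1..k. real (b j))"
      by (simp add: star_weight_def prod_dividef)
    also have "\<dots> = g (b k) / (real x * (\<Prod>j=2..k. real (b j)))"
      using assms(1) that by (simp add: prod.atLeast_Suc_atMost numeral_2_eq_2)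
    finally show ?thesis
      using assms that by (simp add: block_weight_def)
  qed
  then have "(\<Sum>b\<in>{b \<in> block N k. b 1 = x}. block_weight N k b * g (b k))
      = real x / (real N - real x) * chain_sum k (\<lambda>_. {1..N-1}) (\<lambda>_. (\<le>)) (star_weight k g) x"
    by (simp add: chain_sum_def block_def sum_distrib_left)
  then show ?thesis
    using chain_sum_star_weight[OF assms(2), of "k - 1"] assms(1) by (simp add: block_fun_def)
qed

lemma finite_block: "finite (block N k)"
  unfolding block_def by (rule finite_chain_set) simp

lemma sum_block_group_first:
  assumes "1 \<le> k"
  shows "(\<Sum>b\<in>{b \<in> block N k. P (b 1)}. C b)
    = (\<Sum>y\<in>{y \<in> {1..N-1}. P y}. \<Sum>b\<in>{b \<in> block N k. b 1 = y}. C b)"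
proof -
  have "(\<lambda>b. b 1) ` {b \<in> block N k. P (b 1)} \<subseteq> {y \<in> {1..N-1}. P y}"
    using assms by (auto simp: block_def chain_set_def PiE_iff)
  then show ?thesis
    using finite_block by (subst sum.group[symmetric]) (auto intro!: sum.cong)
qed

definition blocks :: "nat \<Rightarrow> nat list \<Rightarrow> nat \<Rightarrow> (nat \<Rightarrow> nat) set" where
  "blocks N ks i = block N (kk ks i)"

definition block_rel :: "nat list \<Rightarrow> nat \<Rightarrow> (nat \<Rightarrow> nat) \<Rightarrow> (nat \<Rightarrow> nat) \<Rightarrow> bool" where
  "block_rel ks i b b' \<longleftrightarrow> (if i \<in> ones_set ks then b (kk ks i) \<le> b' 1 else b (kk ks i) < b' 1)"

definition block_weights :: "nat \<Rightarrow> nat list \<Rightarrow> nat \<Rightarrow> (nat \<Rightarrow> nat) \<Rightarrow> real" where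
  "block_weights N ks i = block_weight N (kk ks i)"

definition right_chain :: "nat \<Rightarrow> nat list \<Rightarrow> nat \<Rightarrow> real" where
  "right_chain N ks x = (\<Sum>b\<in>{b \<in> blocks N ks 1. b 1 = x}.
     chain_sum (length ks) (blocks N ks) (block_rel ks) (block_weights N ks) b)"

lemma chain_sum_blocks_Cons:
  assumes "ks \<noteq> []" "kk ks 1 \<ge> 1" "1 \<le> k" "b \<in> block N k"
  shows "chain_sum (length (k # ks)) (blocks N (k # ks)) (block_rel (k # ks)) (block_weights N (k # ks)) b
    = block_weight N k b * (if k = 1 then sum_from N else sum_above N) (right_chain N ks) (b k)"
proof -
  define rel where "rel c y \<longleftrightarrow> (if k = 1 then c \<le> y else c < y)" for c y :: nat
  have "1 \<le> length ks" using assms(1) by (cases ks) auto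
  have bk: "b k \<in> {1..N-1}" using assms(3,4) by (auto simp: block_def chain_set_def PiE_iff)
  have "{b' \<in> blocks N (k # ks) (Suc 1). block_rel (k # ks) 1 b b'} = {b' \<in> block N (kk ks 1). rel (b k) (b' 1)}"
    by (auto simp: blocks_def block_rel_def kk_def rel_def ones_set_Cons zero_notin_ones_set)
  then have "chain_sum (Suc (length ks)) (blocks N (k # ks)) (block_rel (k # ks)) (block_weights N (k # ks)) b
      = block_weight N k b * (\<Sum>b'\<in>{b' \<in> block N (kk ks 1). rel (b k) (b' 1)}.
          chain_sum (length ks) (\<lambda>i. blocks N (k # ks) (Suc i)) (\<lambda>i. block_rel (k # ks) (Suc i))
            (\<lambda>i. block_weights N (k # ks) (Suc i)) b')"
    using \<open>1 \<le> length ks\<close> assms(4) finite_block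
    by (subst chain_sum_Suc) (auto simp: blocks_def block_weights_def kk_def)
  also have "\<dots> = block_weight N k b * (\<Sum>b'\<in>{b' \<in> block N (kk ks 1). rel (b k) (b' 1)}.
          chain_sum (length ks) (blocks N ks) (block_rel ks) (block_weights N ks) b')"
    by (intro arg_cong[where f = "\<lambda>t. _ * t"] sum.cong refl chain_sum_cong)
      (auto simp: blocks_def block_rel_def block_weights_def kk_Cons_Suc ones_set_Cons)
  also have "\<dots> = block_weight N k b * (\<Sum>y\<in>{y \<in> {1..N-1}. rel (b k) y}. right_chain N ks y)"
    using sum_block_group_first[OF assms(2), where N = N and P = "rel (b k)"
        and C = "chain_sum (length ks) (blocks N ks) (block_rel ks) (block_weights N ks)"]
    by (simp add: right_chain_def blocks_def)
  also have "{y \<in> {1..N-1}. rel (b k) y} = (if k = 1 then {b k..N-1} else {b k<..N-1})"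
    using bk by (auto simp: rel_def)
  finally show ?thesis by (simp add: sum_from_def sum_above_def)
qed

lemma right_chain_Cons:
  assumes "ks \<noteq> []" "kk ks 1 \<ge> 1" "1 \<le> k"
  shows "right_chain N (k # ks) x = (\<Sum>b\<in>{b \<in> block N k. b 1 = x}.
      block_weight N k b * (if k = 1 then sum_from N else sum_above N) (right_chain N ks) (b k))"
proof -
  have "right_chain N (k # ks) x = (\<Sum>b\<in>{b \<in> block N k. b 1 = x}.
      chain_sum (length (k # ks)) (blocks N (k # ks)) (block_rel (k # ks)) (block_weights N (k # ks)) b)"
    by (simp only: right_chain_def blocks_def) (simp add: kk_def)
  also have "\<dots> = (\<Sum>b\<in>{b \<in> block N k. b 1 = x}.
      block_weight N k b * (if k = 1 then sum_from N else sum_above N) (right_chain N ks) (b k))"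
  proof (intro sum.cong refl)
    fix b assume "b \<in> {b \<in> block N k. b 1 = x}"
    then show "chain_sum (length (k # ks)) (blocks N (k # ks)) (block_rel (k # ks)) (block_weights N (k # ks)) b
      = block_weight N k b * (if k = 1 then sum_from N else sum_above N) (right_chain N ks) (b k)"
      using assms by (intro chain_sum_blocks_Cons) auto
  qed
  finally show ?thesis .
qed

lemma right_chain_eq_right_fun:
  assumes "ks \<noteq> []" "\<forall>k\<in>set ks. k > 0" "x \<in> {1..N-1}"
  shows "right_chain N ks x = right_fun N ks x"
  using assms
proof (induction N ks arbitrary: x rule: right_fun.induct)
  case (1 N)
  then show ?case by simp
next
  case (2 N k)
  have "chain_sum 1 (blocks N [k]) (block_rel [k]) (block_weights N [k]) b = block_weight N k b * 1"
    if "b \<in> block N k" for b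
    using that chain_sum_1[of b "blocks N [k]"] by (simp add: blocks_def block_weights_def kk_def)
  then have "right_chain N [k] x = (\<Sum>b\<in>{b \<in> block N k. b 1 = x}. block_weight N k b * (\<lambda>_. 1) (b k))"
    unfolding right_chain_def by (intro sum.cong) (auto simp: blocks_def kk_def)
  then show ?case using 2 sum_block_weight[of k x N "\<lambda>_. 1"] by simp
next
  case (3 N k k' ks)
  let ?G = "if k = 1 then sum_from N else sum_above N"
  have "1 \<le> k" "kk (k' # ks) 1 \<ge> 1" using 3 by (auto simp: kk_def)
  have IH: "right_chain N (k' # ks) y = right_fun N (k' # ks) y" if "y \<in> {1..N-1}" for y
    using 3 that by auto
  have "right_chain N (k # k' # ks) x
      = (\<Sum>b\<in>{b \<in> block N k. b 1 = x}. block_weight N k b * ?G (right_chain N (k' # ks)) (b k))"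
    using \<open>1 \<le> k\<close> \<open>kk (k' # ks) 1 \<ge> 1\<close> by (intro right_chain_Cons) auto
  also have "\<dots> = (\<Sum>b\<in>{b \<in> block N k. b 1 = x}. block_weight N k b * ?G (right_fun N (k' # ks)) (b k))"
  proof (intro sum.cong refl arg_cong[where f = "\<lambda>t. _ * t"])
    fix b assume "b \<in> {b \<in> block N k. b 1 = x}"
    then have "b k \<ge> 1" using \<open>1 \<le> k\<close> by (auto simp: block_def chain_set_def PiE_iff)
    then show "?G (right_chain N (k' # ks)) (b k) = ?G (right_fun N (k' # ks)) (b k)"
      using IH by (auto intro!: sum_from_cong sum_above_cong)
  qed
  also have "\<dots> = right_fun N (k # k' # ks) x"
    using sum_block_weight[OF \<open>1 \<le> k\<close> \<open>x \<in> {1..N-1}\<close>] by simp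
  finally show ?case .
qed

lemma sum_right_chain:
  assumes "ks \<noteq> []" "kk ks 1 \<ge> 1"
  shows "(\<Sum>x=1..N-1. right_chain N ks x)
    = (\<Sum>t\<in>chain_set (length ks) (blocks N ks) (block_rel ks). \<Prod>i=1..length ks. block_weights N ks i (t i))"
proof -
  have "1 \<le> length ks" using assms(1) by (cases ks) auto
  have "(\<lambda>b. b 1) ` block N (kk ks 1) \<subseteq> {1..N-1}"
    using assms(2) by (auto simp: block_def chain_set_def PiE_iff)
  then have "(\<Sum>x=1..N-1. right_chain N ks x) = (\<Sum>b\<in>block N (kk ks 1).
      chain_sum (length ks) (blocks N ks) (block_rel ks) (block_weights N ks) b)"
    unfolding right_chain_def blocks_def using finite_block by (subst sum.group[symmetric]) auto
  also have "\<dots> = (\<Sum>t\<in>chain_set (length ks) (blocks N ks) (block_rel ks).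
      \<Prod>i=1..length ks. block_weights N ks i (t i))"
    using sum_chain_set[OF \<open>1 \<le> length ks\<close>, of "blocks N ks"] by (simp add: blocks_def finite_block)
  finally show ?thesis .
qed

lemma kk_pos:
  assumes "\<forall>k\<in>set ks. k > 0" "i \<in> {1..length ks}"
  shows "1 \<le> kk ks i"
proof -
  have "ks ! (i - 1) \<in> set ks" using assms(2) by auto
  then show ?thesis using assms(1) by (auto simp: kk_def)
qed

lemma uncurry_chain_set_in_T_set:
  assumes "\<forall>k\<in>set ks. k > 0" "ones_set ks \<subseteq> {1..length ks - 1}"
    and t: "t \<in> chain_set (length ks) (blocks N ks) (block_rel ks)"
  shows "(\<lambda>p\<in>SIGMA i:{1..length ks}. {1..kk ks i}. t (fst p) (snd p)) \<in> T_set N ks"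
proof -
  let ?r = "length ks"
  let ?n = "\<lambda>p\<in>SIGMA i:{1..?r}. {1..kk ks i}. t (fst p) (snd p)"
  have ends: "?n (i, kk ks i) = t i (kk ks i)" "?n (Suc i, 1) = t (Suc i) 1"
    and rel: "block_rel ks i (t i) (t (Suc i))" if "i \<in> {1..?r-1}" for i
    using that kk_pos[OF assms(1), of i] kk_pos[OF assms(1), of "Suc i"] t by (auto simp: chain_set_def)
  show ?thesis
    unfolding T_set_def Let_def
  proof (intro CollectI conjI ballI)
    show "?n \<in> (\<Pi>\<^sub>E p\<in>SIGMA i:{1..?r}. {1..kk ks i}. {1..N-1})"
      using t by (auto simp: chain_set_def blocks_def block_def PiE_iff)
    show "?n (i, j) \<le> ?n (i, j + 1)" if "i \<in> {1..?r}" "j \<in> {1..<kk ks i}" for i j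
      using t that by (auto simp: chain_set_def blocks_def block_def PiE_iff)
    show "?n (i, kk ks i) \<le> ?n (i + 1, 1)" if "i \<in> ones_set ks" for i
      using that assms(2) ends[of i] rel[of i] by (auto simp: block_rel_def)
    show "?n (i, kk ks i) < ?n (i + 1, 1)" if "i \<in> {1..?r-1} - ones_set ks" for i
      using that ends[of i] rel[of i] by (simp add: block_rel_def)
  qed
qed

lemma bij_betw_T_set_chain_set:
  assumes "\<forall>k\<in>set ks. k > 0" "ones_set ks \<subseteq> {1..length ks - 1}"
  shows "bij_betw (\<lambda>n. \<lambda>i\<in>{1..length ks}. \<lambda>j\<in>{1..kk ks i}. n (i, j))
    (T_set N ks) (chain_set (length ks) (blocks N ks) (block_rel ks))"
proof (rule bij_betw_byWitness[where f' = "\<lambda>t. \<lambda>p\<in>SIGMA i:{1..length ks}. {1..kk ks i}. t (fst p) (snd p)"])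
  let ?r = "length ks"
  show "\<forall>n\<in>T_set N ks. (\<lambda>p\<in>SIGMA i:{1..?r}. {1..kk ks i}. (\<lambda>i\<in>{1..?r}. \<lambda>j\<in>{1..kk ks i}. n (i, j)) (fst p) (snd p)) = n"
    by (auto simp: T_set_def Let_def PiE_def extensional_def fun_eq_iff)
  show "\<forall>t\<in>chain_set ?r (blocks N ks) (block_rel ks).
      (\<lambda>i\<in>{1..?r}. \<lambda>j\<in>{1..kk ks i}. (\<lambda>p\<in>SIGMA i:{1..?r}. {1..kk ks i}. t (fst p) (snd p)) (i, j)) = t"
  proof
    fix t assume t: "t \<in> chain_set ?r (blocks N ks) (block_rel ks)"
    have tP: "t \<in> PiE {1..?r} (blocks N ks)" using t by (simp add: chain_set_def)
    have "t i \<in> chain_set (kk ks i) (\<lambda>_. {1..N-1}) (\<lambda>_. (\<le>))" if "i \<in> {1..?r}" for i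
      using PiE_mem[OF tP that] by (simp add: blocks_def block_def)
    then have "t i j = undefined" if "i \<in> {1..?r}" "j \<notin> {1..kk ks i}" for i j
      using that chain_set_undefined by metis
    with t show "(\<lambda>i\<in>{1..?r}. \<lambda>j\<in>{1..kk ks i}. (\<lambda>p\<in>SIGMA i:{1..?r}. {1..kk ks i}. t (fst p) (snd p)) (i, j)) = t"
      by (auto simp: chain_set_def PiE_def extensional_def fun_eq_iff)
  qed
  show "(\<lambda>n. \<lambda>i\<in>{1..?r}. \<lambda>j\<in>{1..kk ks i}. n (i, j)) ` T_set N ks \<subseteq> chain_set ?r (blocks N ks) (block_rel ks)"
    using assms(2) kk_pos[OF assms(1)]
    by (auto simp: T_set_def Let_def chain_set_def blocks_def block_def block_rel_def PiE_iff)
  show "(\<lambda>t. \<lambda>p\<in>SIGMA i:{1..?r}. {1..kk ks i}. t (fst p) (snd p)) ` chain_set ?r (blocks N ks) (block_rel ks) \<subseteq> T_set N ks"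
    using uncurry_chain_set_in_T_set[OF assms] by auto
qed

lemma sum_T_set:
  assumes "\<forall>k\<in>set ks. k > 0" "ones_set ks \<subseteq> {1..length ks - 1}"
  shows "(\<Sum>n\<in>T_set N ks. \<Prod>i=1..length ks. 1 / ((real N - real (n (i, 1))) * (\<Prod>j=2..kk ks i. real (n (i, j)))))
    = (\<Sum>t\<in>chain_set (length ks) (blocks N ks) (block_rel ks). \<Prod>i=1..length ks. block_weights N ks i (t i))"
  (is "_ = sum ?g _")
proof -
  let ?split = "\<lambda>n. \<lambda>i\<in>{1..length ks}. \<lambda>j\<in>{1..kk ks i}. n (i, j)"
  have "sum ?g (chain_set (length ks) (blocks N ks) (block_rel ks)) = (\<Sum>n\<in>T_set N ks. ?g (?split n))"
    by (rule sum.reindex_bij_betw[symmetric]) (rule bij_betw_T_set_chain_set[OF assms])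
  also have "\<dots> = (\<Sum>n\<in>T_set N ks. \<Prod>i=1..length ks.
      1 / ((real N - real (n (i, 1))) * (\<Prod>j=2..kk ks i. real (n (i, j)))))"
  proof (intro sum.cong refl prod.cong)
    fix n :: "nat \<times> nat \<Rightarrow> nat" and i assume i: "i \<in> {1..length ks}"
    have "(\<Prod>j=2..kk ks i. real ((\<lambda>j\<in>{1..kk ks i}. n (i, j)) j)) = (\<Prod>j=2..kk ks i. real (n (i, j)))"
      by (intro prod.cong) auto
    then show "block_weights N ks i (?split n i) = 1 / ((real N - real (n (i, 1))) * (\<Prod>j=2..kk ks i. real (n (i, j))))"
      using i kk_pos[OF assms(1) i] by (simp add: block_weights_def block_weight_def)
  qed
  finally show ?thesis ..
qed

theorem mainTheorem13:
  fixes N :: nat and ks :: "nat list"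
  assumes "N > 0" and "admissible ks"
  shows "zeta_diamond N ks =
    (\<Sum>n\<in>T_set N ks. \<Prod>i\<in>{1..length ks}.
        1 / ((real N - real (n (i, 1))) * (\<Prod>j\<in>{2..kk ks i}. real (n (i, j)))))"
proof -
  have ks: "ks \<noteq> []" "\<forall>k\<in>set ks. k > 0" "last ks \<noteq> 1" "kk ks 1 \<ge> 1"
    using assms(2) kk_pos[of ks 1] by (auto simp: admissible_def Suc_le_eq)
  have "zeta_diamond N ks = (\<Sum>x=1..N-1. left_chain N ks x)"
    by (rule zeta_diamond_eq_sum_left_chain[OF assms(2)])
  also have "\<dots> = (\<Sum>x=1..N-1. transfer_sum N (right_fun N ks) x)"
    using ks by (intro sum.cong) (simp_all add: left_chain_eq_left_fun left_fun_eq_transfer_sum_right_fun)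
  also have "\<dots> = (\<Sum>x=1..N-1. right_fun N ks x)"
    by (rule sum_transfer_sum)
  also have "\<dots> = (\<Sum>x=1..N-1. right_chain N ks x)"
    using ks by (intro sum.cong) (simp_all add: right_chain_eq_right_fun)
  also have "\<dots> = (\<Sum>t\<in>chain_set (length ks) (blocks N ks) (block_rel ks). \<Prod>i=1..length ks. block_weights N ks i (t i))"
    using ks(1,4) by (rule sum_right_chain)
  also have "\<dots> = (\<Sum>n\<in>T_set N ks. \<Prod>i\<in>{1..length ks}.
        1 / ((real N - real (n (i, 1))) * (\<Prod>j\<in>{2..kk ks i}. real (n (i, j)))))"
    by (rule sum_T_set[OF ks(2) ones_set_subset[OF assms(2)], symmetric])
  finally show ?thesis .
qed

end
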